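(* Let $\Delta$ be a shellable simplicial complex on $[n]$ with $\dim\Delta\le n-3$, with shelling $F_1,\dots,F_q$, and let $F=F_q$ be the last facet. Let $\Delta_F$ be the simplicial complex on $F\cup\{v\}$ ($v$ a new vertex) whose facets are: (A) the sets $F_i\cap F$ maximal among $\{F_i\cap F: F\not\subseteq F_i,\ F_i\cup F\neq[n]\}$, and (B) the sets $(F_i\cap F)\cup\{v\}$ for facets $F_i$ with $F_i\cup F=[n]$. Then $\Delta_F$ is shellable. Moreover, there is a shelling of $\Delta_F$ such that for every facet of type (B), $\widetilde F_i=(F_i\cap F)\cup\{v\}$, one has $\widetilde G_i=G_i\cap F$, where $\widetilde G_i$ is computed in $\Delta_F$ with respect to this shelling and $G_i$ in $\Delta$ with respect to $F_1,\dots,F_q$.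
   Context: A shelling is an ordering $F_1,\dots,F_q$ of all facets such that for each $k\ge2$, $(\bigcup_{i<k}2^{F_i})\cap2^{F_k}$ is pure of dimension $\dim F_k-1$; a complex is shellable if it has one. A wall of a facet is a codimension-one face of it. For a shelling $F_1,\dots,F_q$, set $G_1=F_1$ and for $i\ge2$ let $G_i$ be the intersection of all walls of $F_i$ lying in the subcomplex generated by $F_1,\dots,F_{i-1}$. *)

theory Defs
  imports Main
begin

definition simplicial_complex :: "'a set \<Rightarrow> 'a set set \<Rightarrow> bool" where
  "simplicial_complex V K \<longleftrightarrow>
     (\<forall>F\<in>K. finite F \<and> F \<subseteq> V) \<and> (\<forall>F\<in>K. \<forall>G. G \<subseteq> F \<longrightarrow> G \<in> K)"

definition maximal_sets :: "'a set set \<Rightarrow> 'a set set" where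
  "maximal_sets S = {X \<in> S. \<forall>Y\<in>S. X \<subseteq> Y \<longrightarrow> Y = X}"

definition facets :: "'a set set \<Rightarrow> 'a set set" where
  "facets K = maximal_sets K"

definition pure_of_dim :: "int \<Rightarrow> 'a set set \<Rightarrow> bool" where
  "pure_of_dim d K \<longleftrightarrow> (\<forall>F\<in>facets K. int (card F) - 1 = d)"

definition gen_complex :: "'a set set \<Rightarrow> 'a set set" where
  "gen_complex S = {G. \<exists>F\<in>S. G \<subseteq> F}"

text \<open>A shelling (0-based list indices): for every k \<ge> 1 (paper: k \<ge> 2), the complex
  (\<Union>i<k. 2^{F_i}) \<inter> 2^{F_k} is pure of dimension dim F_k - 1.\<close>
definition is_shelling :: "'a set set \<Rightarrow> 'a set list \<Rightarrow> bool" where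
  "is_shelling K Fs \<longleftrightarrow> distinct Fs \<and> set Fs = facets K \<and>
     (\<forall>k. 0 < k \<and> k < length Fs \<longrightarrow>
        pure_of_dim ((int (card (Fs ! k)) - 1) - 1)
          ((\<Union>i<k. Pow (Fs ! i)) \<inter> Pow (Fs ! k)))"

definition shellable :: "'a set set \<Rightarrow> bool" where
  "shellable K \<longleftrightarrow> (\<exists>Fs. is_shelling K Fs)"

text \<open>G_k for a shelling (0-based): G_0 = F_0; for k \<ge> 1 the intersection of all walls
  (codimension-one faces) of F_k lying in the subcomplex generated by F_0,...,F_{k-1}
  (intersection taken inside F_k).\<close>
definition shell_G :: "'a set list \<Rightarrow> nat \<Rightarrow> 'a set" where
  "shell_G Fs k = (if k = 0 then Fs ! 0 else
     {x \<in> Fs ! k. \<forall>W. W \<subseteq> Fs ! k \<and> card W + 1 = card (Fs ! k) \<and>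
                        (\<exists>j<k. W \<subseteq> Fs ! j) \<longrightarrow> x \<in> W})"

end

theory Submission
  imports Defs
begin

text \<open>The facets of type (A) are exactly the walls F - {x} of F = F_q that lie in the complex
  generated by F_1, ..., F_{q-1}; those of type (B) are the cones v * (F_i \<inter> F) over the facets
  F_i containing [n] - F, i.e. the cone over the link of [n] - F. Listing the walls first, in any
  order, and then the cones in the order inherited from F_1, ..., F_q gives a shelling: the walls
  of a simplex are shelled in any order, passing to the star of a face, to its link and to a cone
  preserves shelling orders, and the wall F_i \<inter> F of a cone opposite v lies in a wall of F by the
  shelling condition for F_q. Consequently v never belongs to the new G_i, while a vertex z of
  F_i \<inter> F belongs to it iff F_i - {z} lies in no earlier facet, i.e. iff z belongs to G_i.\<close>

definition antichain :: "'a set set \<Rightarrow> bool" where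
  "antichain S \<longleftrightarrow> (\<forall>X\<in>S. \<forall>Y\<in>S. X \<subseteq> Y \<longrightarrow> X = Y)"

lemma antichain_facets: "antichain (facets K)"
  unfolding antichain_def facets_def maximal_sets_def by simp

lemma maximal_sets_eqI:
  assumes sub: "T \<subseteq> S" and cover: "\<forall>X\<in>S. \<exists>Y\<in>T. X \<subseteq> Y" and anti: "antichain T"
  shows "maximal_sets S = T"
proof (intro set_eqI iffI)
  fix X assume "X \<in> maximal_sets S"
  then have X: "X \<in> S" "\<forall>Y\<in>S. X \<subseteq> Y \<longrightarrow> Y = X"
    unfolding maximal_sets_def by simp_all
  then obtain Y where Y: "Y \<in> T" "X \<subseteq> Y"
    using cover by blast
  then have "Y = X"
    using X(2) sub by (meson subsetD)
  with Y show "X \<in> T"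
    by simp
next
  fix X assume X: "X \<in> T"
  have "Y = X" if "Y \<in> S" "X \<subseteq> Y" for Y
  proof -
    obtain Z where "Z \<in> T" "Y \<subseteq> Z"
      using cover \<open>Y \<in> S\<close> by blast
    then have "X = Z"
      using anti X \<open>X \<subseteq> Y\<close> unfolding antichain_def by (meson order_trans)
    with \<open>X \<subseteq> Y\<close> \<open>Y \<subseteq> Z\<close> show "Y = X"
      by simp
  qed
  moreover have "X \<in> S"
    using X sub by blast
  ultimately show "X \<in> maximal_sets S"
    unfolding maximal_sets_def by simp
qed

lemma facets_gen_complex:
  assumes "antichain S"
  shows "facets (gen_complex S) = S"
  unfolding facets_def
proof (rule maximal_sets_eqI)
  show "S \<subseteq> gen_complex S" "\<forall>X\<in>gen_complex S. \<exists>Y\<in>S. X \<subseteq> Y"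
    unfolding gen_complex_def by blast+
qed (fact assms)

lemma simplicial_complex_gen_complex:
  assumes "finite V" "\<forall>X\<in>S. X \<subseteq> V"
  shows "simplicial_complex V (gen_complex S)"
  unfolding simplicial_complex_def gen_complex_def
proof (intro conjI ballI allI impI)
  fix X assume "X \<in> {G. \<exists>F\<in>S. G \<subseteq> F}"
  then have "X \<subseteq> V"
    using assms(2) by blast
  then show "finite X" "X \<subseteq> V"
    using assms(1) finite_subset by blast+
next
  fix X G assume "X \<in> {G. \<exists>F\<in>S. G \<subseteq> F}" "G \<subseteq> X"
  then show "G \<in> {G. \<exists>F\<in>S. G \<subseteq> F}"
    by blast
qed

lemma wall_eq_Diff_singleton:
  assumes "finite X" "W \<subseteq> X" "card W + 1 = card X"
  shows "\<exists>x\<in>X. W = X - {x}"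
proof -
  have "W \<noteq> X"
    using assms(3) by auto
  then obtain x where x: "x \<in> X" "x \<notin> W"
    using assms(2) by blast
  have "W = X - {x}"
    using x assms by (intro card_subset_eq) auto
  with x show ?thesis by blast
qed

lemma pure_codim_one_iff:
  assumes "finite X" "S \<subseteq> Pow X"
  shows "pure_of_dim (int (card X) - 1 - 1) S \<longleftrightarrow> (\<forall>Y\<in>S. \<exists>x\<in>X. Y \<subseteq> X - {x} \<and> X - {x} \<in> S)"
proof
  assume pure: "pure_of_dim (int (card X) - 1 - 1) S"
  show "\<forall>Y\<in>S. \<exists>x\<in>X. Y \<subseteq> X - {x} \<and> X - {x} \<in> S"
  proof
    fix Y assume "Y \<in> S"
    moreover have "finite S"
      using assms finite_subset by blast
    ultimately obtain Z where Z: "Z \<in> S" "Y \<subseteq> Z" "\<forall>Z'\<in>S. Z \<subseteq> Z' \<longrightarrow> Z = Z'"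
      using finite_has_maximal2 by metis
    then have "Z \<in> facets S"
      unfolding facets_def maximal_sets_def by auto
    then have "card Z + 1 = card X"
      using pure unfolding pure_of_dim_def by fastforce
    moreover have "Z \<subseteq> X"
      using Z assms by blast
    ultimately obtain x where "x \<in> X" "Z = X - {x}"
      using wall_eq_Diff_singleton assms(1) by blast
    with Z show "\<exists>x\<in>X. Y \<subseteq> X - {x} \<and> X - {x} \<in> S" by blast
  qed
next
  assume walls: "\<forall>Y\<in>S. \<exists>x\<in>X. Y \<subseteq> X - {x} \<and> X - {x} \<in> S"
  show "pure_of_dim (int (card X) - 1 - 1) S"
    unfolding pure_of_dim_def
  proof
    fix Y assume "Y \<in> facets S"
    then have Y: "Y \<in> S" "\<forall>Z\<in>S. Y \<subseteq> Z \<longrightarrow> Z = Y"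
      unfolding facets_def maximal_sets_def by auto
    obtain x where x: "x \<in> X" "Y \<subseteq> X - {x}" "X - {x} \<in> S"
      using walls Y(1) by blast
    then have "Y = X - {x}"
      using Y(2) by blast
    then have "card Y + 1 = card X"
      using card.remove[OF assms(1) x(1)] by simp
    then show "int (card Y) - 1 = int (card X) - 1 - 1" by linarith
  qed
qed

definition shelling_step :: "'a set list \<Rightarrow> 'a set \<Rightarrow> bool" where
  "shelling_step Ys X \<longleftrightarrow> (\<forall>Y\<in>set Ys. \<exists>x\<in>X - Y. \<exists>Z\<in>set Ys. X - {x} \<subseteq> Z)"

definition shelling_order :: "'a set list \<Rightarrow> bool" where
  "shelling_order Fs \<longleftrightarrow> (\<forall>k<length Fs. shelling_step (take k Fs) (Fs ! k))"

lemma shelling_order_Nil [simp]: "shelling_order []"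
  by (simp add: shelling_order_def)

lemma shelling_order_snoc [simp]:
  "shelling_order (Fs @ [X]) \<longleftrightarrow> shelling_order Fs \<and> shelling_step Fs X"
  by (auto simp: shelling_order_def less_Suc_eq nth_append)

lemma Bex_set_take_iff:
  assumes "k \<le> length xs"
  shows "(\<exists>y\<in>set (take k xs). P y) \<longleftrightarrow> (\<exists>i<k. P (xs ! i))"
proof
  assume "\<exists>y\<in>set (take k xs). P y"
  then show "\<exists>i<k. P (xs ! i)"
    by (auto simp: in_set_conv_nth) blast
next
  assume "\<exists>i<k. P (xs ! i)"
  then obtain i where "i < k" "P (xs ! i)"
    by blast
  moreover have "xs ! i \<in> set (take k xs)"
    using \<open>i < k\<close> assms by (simp add: in_set_conv_nth) (metis length_take min.absorb4 nth_take)
  ultimately show "\<exists>y\<in>set (take k xs). P y"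
    by blast
qed

lemma Ball_set_take_iff:
  assumes "k \<le> length xs"
  shows "(\<forall>y\<in>set (take k xs). P y) \<longleftrightarrow> (\<forall>i<k. P (xs ! i))"
  using Bex_set_take_iff[OF assms, of "\<lambda>y. \<not> P y"] by blast

lemma is_shelling_iff:
  assumes "\<forall>X\<in>set Fs. finite X"
  shows "is_shelling K Fs \<longleftrightarrow> distinct Fs \<and> set Fs = facets K \<and> shelling_order Fs"
proof -
  have "pure_of_dim (int (card (Fs ! k)) - 1 - 1) ((\<Union>i<k. Pow (Fs ! i)) \<inter> Pow (Fs ! k))
      \<longleftrightarrow> shelling_step (take k Fs) (Fs ! k)" if "k < length Fs" for k
  proof -
    let ?X = "Fs ! k"
    have "finite ?X"
      using assms that by simp
    let ?S = "(\<Union>i<k. Pow (Fs ! i)) \<inter> Pow ?X"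
    have "pure_of_dim (int (card ?X) - 1 - 1) ?S \<longleftrightarrow>
        (\<forall>Y\<in>?S. \<exists>x\<in>?X. Y \<subseteq> ?X - {x} \<and> ?X - {x} \<in> ?S)"
      using \<open>finite ?X\<close> by (intro pure_codim_one_iff) auto
    also have "\<dots> \<longleftrightarrow> (\<forall>i<k. \<exists>x\<in>?X - Fs ! i. \<exists>j<k. ?X - {x} \<subseteq> Fs ! j)"
    proof
      assume walls: "\<forall>Y\<in>?S. \<exists>x\<in>?X. Y \<subseteq> ?X - {x} \<and> ?X - {x} \<in> ?S"
      show "\<forall>i<k. \<exists>x\<in>?X - Fs ! i. \<exists>j<k. ?X - {x} \<subseteq> Fs ! j"
      proof (intro allI impI)
        fix i assume "i < k"
        then have "Fs ! i \<inter> ?X \<in> ?S"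
          by auto
        then obtain x where "x \<in> ?X" "Fs ! i \<inter> ?X \<subseteq> ?X - {x}" "?X - {x} \<in> ?S"
          using bspec[OF walls] by metis
        then show "\<exists>x\<in>?X - Fs ! i. \<exists>j<k. ?X - {x} \<subseteq> Fs ! j"
          by blast
      qed
    next
      assume walls: "\<forall>i<k. \<exists>x\<in>?X - Fs ! i. \<exists>j<k. ?X - {x} \<subseteq> Fs ! j"
      show "\<forall>Y\<in>?S. \<exists>x\<in>?X. Y \<subseteq> ?X - {x} \<and> ?X - {x} \<in> ?S"
      proof
        fix Y assume "Y \<in> ?S"
        then obtain i where "i < k" "Y \<subseteq> Fs ! i" "Y \<subseteq> ?X"
          by blast
        then obtain x j where "x \<in> ?X - Fs ! i" "j < k" "?X - {x} \<subseteq> Fs ! j"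
          using walls by blast
        then show "\<exists>x\<in>?X. Y \<subseteq> ?X - {x} \<and> ?X - {x} \<in> ?S"
          using \<open>Y \<subseteq> Fs ! i\<close> \<open>Y \<subseteq> ?X\<close> by blast
      qed
    qed
    also have "\<dots> \<longleftrightarrow> shelling_step (take k Fs) ?X"
      unfolding shelling_step_def using that by (simp add: Bex_set_take_iff Ball_set_take_iff)
    finally show ?thesis .
  qed
  moreover have "shelling_step (take 0 Fs) X" for X
    by (simp add: shelling_step_def)
  ultimately show ?thesis
    unfolding is_shelling_def shelling_order_def by (metis gr0I)
qed

lemma shell_G_append_Cons:
  assumes "finite X"
  shows "shell_G (Ps @ X # Qs) (length Ps) = {z \<in> X. \<forall>Y\<in>set Ps. \<not> X - {z} \<subseteq> Y}"
proof -
  have earlier: "(\<exists>j<length Ps. W \<subseteq> (Ps @ X # Qs) ! j) \<longleftrightarrow> (\<exists>Y\<in>set Ps. W \<subseteq> Y)" for W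
    by (metis Bex_set_take_iff nth_append order.refl take_all)
  have "(\<forall>W. W \<subseteq> X \<and> card W + 1 = card X \<and> (\<exists>Y\<in>set Ps. W \<subseteq> Y) \<longrightarrow> z \<in> W)
      \<longleftrightarrow> (\<forall>Y\<in>set Ps. \<not> X - {z} \<subseteq> Y)" if "z \<in> X" for z
  proof
    assume "\<forall>W. W \<subseteq> X \<and> card W + 1 = card X \<and> (\<exists>Y\<in>set Ps. W \<subseteq> Y) \<longrightarrow> z \<in> W"
    moreover have "card (X - {z}) + 1 = card X"
      using card.remove[OF assms that] by simp
    ultimately show "\<forall>Y\<in>set Ps. \<not> X - {z} \<subseteq> Y"
      by blast
  next
    assume no_wall: "\<forall>Y\<in>set Ps. \<not> X - {z} \<subseteq> Y"
    show "\<forall>W. W \<subseteq> X \<and> card W + 1 = card X \<and> (\<exists>Y\<in>set Ps. W \<subseteq> Y) \<longrightarrow> z \<in> W"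
    proof (intro allI impI)
      fix W assume W: "W \<subseteq> X \<and> card W + 1 = card X \<and> (\<exists>Y\<in>set Ps. W \<subseteq> Y)"
      then obtain x where "W = X - {x}"
        using wall_eq_Diff_singleton[OF assms] by blast
      with W no_wall that show "z \<in> W"
        by blast
    qed
  qed
  then show ?thesis
    unfolding shell_G_def earlier by auto
qed

lemma shelling_step_append:
  assumes "shelling_step As X" "shelling_step Bs X"
  shows "shelling_step (As @ Bs) X"
  using assms unfolding shelling_step_def by (metis Un_iff set_append)

lemma shelling_order_append:
  assumes "shelling_order As" "shelling_order Bs" "\<forall>X\<in>set Bs. shelling_step As X"
  shows "shelling_order (As @ Bs)"
  using assms(2,3)
proof (induction Bs rule: rev_induct)
  case Nil
  then show ?case
    using assms(1) by simp
next
  case (snoc X Bs)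
  then show ?case
    using shelling_order_snoc[of "As @ Bs" X] by (simp add: shelling_step_append)
qed

lemma shelling_order_walls:
  assumes "set xs \<subseteq> X" "distinct xs"
  shows "shelling_order (map (\<lambda>x. X - {x}) xs)"
  using assms
proof (induction xs rule: rev_induct)
  case (snoc y xs)
  have "shelling_step (map (\<lambda>x. X - {x}) xs) (X - {y})"
    unfolding shelling_step_def
  proof
    fix Y assume "Y \<in> set (map (\<lambda>x. X - {x}) xs)"
    then obtain x where "x \<in> set xs" "Y = X - {x}"
      by auto
    moreover have "x \<in> X - {y} - Y" "X - {y} - {x} \<subseteq> Y"
      using calculation snoc.prems by auto
    ultimately show "\<exists>x\<in>X - {y} - Y. \<exists>Z\<in>set (map (\<lambda>x. X - {x}) xs). X - {y} - {x} \<subseteq> Z"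
      by auto
  qed
  with snoc show ?case
    by simp
qed simp

lemma shelling_order_filter_superset:
  assumes "shelling_order Fs"
  shows "shelling_order (filter (\<lambda>X. C \<subseteq> X) Fs)"
  using assms
proof (induction Fs rule: rev_induct)
  case (snoc X Fs)
  have "shelling_step (filter (\<lambda>X. C \<subseteq> X) Fs) X" if "C \<subseteq> X"
    unfolding shelling_step_def
  proof
    fix Y assume "Y \<in> set (filter (\<lambda>X. C \<subseteq> X) Fs)"
    then have "Y \<in> set Fs" "C \<subseteq> Y"
      by auto
    then obtain x Z where "x \<in> X - Y" "Z \<in> set Fs" "X - {x} \<subseteq> Z"
      using snoc.prems unfolding shelling_order_snoc shelling_step_def by metis
    moreover have "C \<subseteq> Z"
      using calculation \<open>C \<subseteq> Y\<close> that by auto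
    ultimately show "\<exists>x\<in>X - Y. \<exists>Z\<in>set (filter (\<lambda>X. C \<subseteq> X) Fs). X - {x} \<subseteq> Z"
      by auto
  qed
  with snoc show ?case
    by simp
qed simp

lemma shelling_order_map_cone:
  assumes "shelling_order Fs" and "\<forall>X\<in>set Fs. C \<subseteq> X \<and> X \<subseteq> C \<union> D \<and> v \<notin> X"
  shows "shelling_order (map (\<lambda>X. insert v (X \<inter> D)) Fs)"
  using assms
proof (induction Fs rule: rev_induct)
  case (snoc X Fs)
  let ?cone = "\<lambda>X. insert v (X \<inter> D)"
  have "shelling_step (map ?cone Fs) (?cone X)"
    unfolding shelling_step_def
  proof
    fix Y' assume "Y' \<in> set (map ?cone Fs)"
    then obtain Y where Y: "Y \<in> set Fs" "Y' = ?cone Y"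
      by auto
    then obtain x Z where xZ: "x \<in> X - Y" "Z \<in> set Fs" "X - {x} \<subseteq> Z"
      using snoc.prems(1) unfolding shelling_order_snoc shelling_step_def by metis
    moreover have "C \<subseteq> Y" "C \<subseteq> X" "X \<subseteq> C \<union> D" "v \<notin> X"
      using Y(1) snoc.prems(2) by auto
    ultimately have "x \<in> ?cone X - Y'" "?cone X - {x} \<subseteq> ?cone Z"
      using Y(2) by auto
    with xZ(2) show "\<exists>x\<in>?cone X - Y'. \<exists>Z'\<in>set (map ?cone Fs). ?cone X - {x} \<subseteq> Z'"
      by auto
  qed
  with snoc show ?case
    by simp
qed simp

lemma cone_shell_G_set_eq:
  fixes As Ps :: "'a set list"
  assumes "C \<inter> D = {}" "C \<subseteq> X" "X \<subseteq> C \<union> D" "v \<notin> X"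
    and "\<forall>Y\<in>set As. v \<notin> Y" "\<exists>Y\<in>set As. X \<inter> D \<subseteq> Y"
  defines "Ls \<equiv> As @ map (\<lambda>Y. insert v (Y \<inter> D)) (filter (\<lambda>Y. C \<subseteq> Y) Ps)"
  shows "{z \<in> insert v (X \<inter> D). \<forall>Y\<in>set Ls. \<not> insert v (X \<inter> D) - {z} \<subseteq> Y}
       = {z \<in> X. \<forall>Y\<in>set Ps. \<not> X - {z} \<subseteq> Y} \<inter> D"
proof (intro set_eqI iffI)
  fix z assume z: "z \<in> {z \<in> insert v (X \<inter> D). \<forall>Y\<in>set Ls. \<not> insert v (X \<inter> D) - {z} \<subseteq> Y}"
  have "insert v (X \<inter> D) - {v} = X \<inter> D"
    using assms(4) by blast
  then have "z \<noteq> v"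
    using z assms(6) unfolding Ls_def by auto
  with z have zXD: "z \<in> X \<inter> D"
    by blast
  have "\<not> X - {z} \<subseteq> Y" if "Y \<in> set Ps" for Y
  proof
    assume "X - {z} \<subseteq> Y"
    with zXD assms(1,2) have "C \<subseteq> Y"
      by blast
    with that have "insert v (Y \<inter> D) \<in> set Ls"
      unfolding Ls_def by auto
    moreover have "insert v (X \<inter> D) - {z} \<subseteq> insert v (Y \<inter> D)"
      using \<open>X - {z} \<subseteq> Y\<close> by blast
    ultimately show False
      using z by blast
  qed
  with zXD show "z \<in> {z \<in> X. \<forall>Y\<in>set Ps. \<not> X - {z} \<subseteq> Y} \<inter> D"
    by blast
next
  fix z assume z: "z \<in> {z \<in> X. \<forall>Y\<in>set Ps. \<not> X - {z} \<subseteq> Y} \<inter> D"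
  have "\<not> insert v (X \<inter> D) - {z} \<subseteq> Y" if "Y \<in> set Ls" for Y
  proof
    assume sub: "insert v (X \<inter> D) - {z} \<subseteq> Y"
    from that consider "Y \<in> set As" | Y0 where "Y0 \<in> set Ps" "C \<subseteq> Y0" "Y = insert v (Y0 \<inter> D)"
      unfolding Ls_def by auto
    then show False
    proof cases
      case 1
      then show False
        using sub z assms(4,5) by blast
    next
      case 2
      then have "X - {z} \<subseteq> Y0"
        using sub assms(3,4) by blast
      with 2 z show False
        by blast
    qed
  qed
  with z show "z \<in> {z \<in> insert v (X \<inter> D). \<forall>Y\<in>set Ls. \<not> insert v (X \<inter> D) - {z} \<subseteq> Y}"
    by blast
qed

lemma setcompr_nth_eq: "{f (xs ! i) | i. i < length xs \<and> P (xs ! i)} = {f x | x. x \<in> set xs \<and> P x}"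
  by (auto simp: in_set_conv_nth)

text \<open>Ys @ [F] is the shelling F_1, ..., F_q of a complex on U = [n] with last facet F = F_q;
  the bound card X + 2 \<le> card U is the hypothesis dim \<Delta> \<le> n - 3.\<close>

locale shelling_last_facet =
  fixes U :: "'a set" and Ys :: "'a set list" and F :: "'a set" and v :: 'a
  assumes finite_U: "finite U"
    and shelling: "shelling_order (Ys @ [F])"
    and distinct: "distinct (Ys @ [F])"
    and antichain: "antichain (set (Ys @ [F]))"
    and facet_subset: "\<forall>X\<in>set (Ys @ [F]). X \<subseteq> U"
    and facet_card: "\<forall>X\<in>set (Ys @ [F]). card X + 2 \<le> card U"
    and v_notin: "v \<notin> U"
begin

definition restriction :: "'a set" where
  "restriction = {x \<in> F. \<exists>Y\<in>set Ys. F - {x} \<subseteq> Y}"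

definition cone :: "'a set \<Rightarrow> 'a set" where
  "cone X = insert v (X \<inter> F)"

definition walls_list :: "'a list" where
  "walls_list = (SOME xs. set xs = restriction \<and> distinct xs)"

definition Delta_F_shelling :: "'a set list" where
  "Delta_F_shelling = map (\<lambda>x. F - {x}) walls_list @ map cone (filter (\<lambda>Y. U - F \<subseteq> Y) Ys)"

lemma F_subset: "F \<subseteq> U"
  using facet_subset by simp

lemma finite_F: "finite F"
  using F_subset finite_U finite_subset by blast

lemma v_notin_F: "v \<notin> F"
  using F_subset v_notin by blast

text \<open>This is where the dimension bound enters: it keeps facets of type (A) and (B) apart.\<close>

lemma coatom_not_in_facet:
  assumes "X \<in> set (Ys @ [F])"
  shows "\<not> U - {x} \<subseteq> X"
proof
  assume "U - {x} \<subseteq> X"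
  then have "card (U - {x}) \<le> card X"
    using assms facet_subset finite_U by (meson card_mono finite_subset)
  moreover have "card U \<le> card (U - {x}) + 1"
    by (cases "x \<in> U") (simp_all add: card_Diff_singleton_if)
  ultimately show False
    using assms facet_card by fastforce
qed

lemma not_complement_subset_F: "\<not> U - F \<subseteq> F"
  using coatom_not_in_facet[of F] by auto

lemma union_F_eq_U_iff:
  assumes "X \<subseteq> U"
  shows "X \<union> F = U \<longleftrightarrow> U - F \<subseteq> X"
  using assms F_subset by auto

lemma walls_list: "set walls_list = restriction" "distinct walls_list"
proof -
  have "finite restriction"
    using finite_F unfolding restriction_def by simp
  then have "\<exists>xs. set xs = restriction \<and> distinct xs"
    using finite_distinct_list by blast
  then show "set walls_list = restriction" "distinct walls_list"
    unfolding walls_list_def by (metis (mono_tags, lifting) someI_ex)+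
qed

lemma last_facet_wall:
  assumes "Y \<in> set Ys"
  shows "\<exists>x\<in>restriction. x \<notin> Y"
proof -
  have "shelling_step Ys F"
    using shelling by simp
  with assms obtain x where "x \<in> F - Y" "\<exists>Z\<in>set Ys. F - {x} \<subseteq> Z"
    unfolding shelling_step_def by blast
  then show ?thesis
    unfolding restriction_def by blast
qed

lemma restriction_subset: "restriction \<subseteq> F"
  unfolding restriction_def by blast

lemma antichain_walls: "antichain ((\<lambda>x. F - {x}) ` restriction)"
  unfolding antichain_def
proof (intro ballI impI)
  fix W W' assume "W \<in> (\<lambda>x. F - {x}) ` restriction" "W' \<in> (\<lambda>x. F - {x}) ` restriction" "W \<subseteq> W'"
  then obtain x y where "x \<in> F" "y \<in> F" "W = F - {x}" "W' = F - {y}"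
    using restriction_subset by blast
  with \<open>W \<subseteq> W'\<close> show "W = W'"
    by (cases "x = y") auto
qed

lemma type_A_facets:
  "maximal_sets {Y \<inter> F | Y. Y \<in> set (Ys @ [F]) \<and> \<not> F \<subseteq> Y \<and> Y \<union> F \<noteq> U}
    = (\<lambda>x. F - {x}) ` restriction"
proof (rule maximal_sets_eqI)
  show "(\<lambda>x. F - {x}) ` restriction \<subseteq> {Y \<inter> F | Y. Y \<in> set (Ys @ [F]) \<and> \<not> F \<subseteq> Y \<and> Y \<union> F \<noteq> U}"
  proof
    fix W assume "W \<in> (\<lambda>x. F - {x}) ` restriction"
    then obtain x Z where x: "x \<in> F" "W = F - {x}" and Z: "Z \<in> set Ys" "F - {x} \<subseteq> Z"
      unfolding restriction_def by blast
    have "Z \<noteq> F"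
      using Z(1) distinct by auto
    then have "\<not> F \<subseteq> Z"
      using Z(1) antichain unfolding antichain_def by auto
    then have "Z \<inter> F = W"
      using x Z(2) by blast
    moreover have "Z \<union> F \<noteq> U"
      using coatom_not_in_facet[of Z x] Z by auto
    ultimately show "W \<in> {Y \<inter> F | Y. Y \<in> set (Ys @ [F]) \<and> \<not> F \<subseteq> Y \<and> Y \<union> F \<noteq> U}"
      using Z(1) \<open>\<not> F \<subseteq> Z\<close> by auto
  qed
  show "\<forall>W\<in>{Y \<inter> F | Y. Y \<in> set (Ys @ [F]) \<and> \<not> F \<subseteq> Y \<and> Y \<union> F \<noteq> U}.
      \<exists>W'\<in>(\<lambda>x. F - {x}) ` restriction. W \<subseteq> W'"
  proof
    fix W assume "W \<in> {Y \<inter> F | Y. Y \<in> set (Ys @ [F]) \<and> \<not> F \<subseteq> Y \<and> Y \<union> F \<noteq> U}"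
    then obtain Y where "Y \<in> set Ys" "W = Y \<inter> F"
      by auto
    then obtain x where "x \<in> restriction" "W \<subseteq> F - {x}"
      using last_facet_wall by blast
    then show "\<exists>W'\<in>(\<lambda>x. F - {x}) ` restriction. W \<subseteq> W'"
      by blast
  qed
  show "antichain ((\<lambda>x. F - {x}) ` restriction)"
    by (fact antichain_walls)
qed

lemma type_B_facets:
  "{insert v (Y \<inter> F) | Y. Y \<in> set (Ys @ [F]) \<and> Y \<union> F = U}
    = cone ` set (filter (\<lambda>Y. U - F \<subseteq> Y) Ys)"
proof -
  have "Y \<in> set (Ys @ [F]) \<and> Y \<union> F = U \<longleftrightarrow> Y \<in> set Ys \<and> U - F \<subseteq> Y" for Y
  proof (cases "Y \<in> set (Ys @ [F])")
    case True
    then have "Y \<union> F = U \<longleftrightarrow> U - F \<subseteq> Y"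
      using union_F_eq_U_iff facet_subset by blast
    with True show ?thesis
      using not_complement_subset_F by auto
  qed simp
  then show ?thesis
    unfolding cone_def by auto
qed

lemma cone_subset_cone_iff:
  assumes "U - F \<subseteq> X" "U - F \<subseteq> Y" "X \<subseteq> U"
  shows "cone X \<subseteq> cone Y \<longleftrightarrow> X \<subseteq> Y"
  using assms v_notin_F unfolding cone_def by blast

lemma set_Delta_F_shelling:
  "set Delta_F_shelling = (\<lambda>x. F - {x}) ` restriction \<union> cone ` set (filter (\<lambda>Y. U - F \<subseteq> Y) Ys)"
  unfolding Delta_F_shelling_def using walls_list by simp

lemma Delta_F_shelling_subset: "X \<in> set Delta_F_shelling \<Longrightarrow> X \<subseteq> insert v F"
  using restriction_subset unfolding set_Delta_F_shelling cone_def by auto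

lemma antichain_Delta_F_shelling: "antichain (set Delta_F_shelling)"
  unfolding antichain_def
proof (intro ballI impI)
  fix W W' assume W: "W \<in> set Delta_F_shelling" and W': "W' \<in> set Delta_F_shelling" and "W \<subseteq> W'"
  have walls_v: "v \<notin> F - {x}" for x
    using v_notin_F by blast
  have cone_v: "v \<in> cone Y" for Y
    unfolding cone_def by blast
  show "W = W'"
  proof (cases "v \<in> W")
    case True
    with W walls_v obtain Y where Y: "Y \<in> set Ys" "U - F \<subseteq> Y" "W = cone Y"
      unfolding set_Delta_F_shelling by auto
    with \<open>W \<subseteq> W'\<close> have "v \<in> W'"
      using cone_v by blast
    with W' walls_v obtain Y' where Y': "Y' \<in> set Ys" "U - F \<subseteq> Y'" "W' = cone Y'"
      unfolding set_Delta_F_shelling by auto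
    have "Y \<subseteq> Y'"
      using cone_subset_cone_iff[of Y Y'] Y Y' \<open>W \<subseteq> W'\<close> facet_subset by simp
    then have "Y = Y'"
      using antichain Y(1) Y'(1) unfolding antichain_def by simp
    with Y Y' show ?thesis
      by simp
  next
    case False
    with W cone_v obtain x where x: "x \<in> restriction" "W = F - {x}"
      unfolding set_Delta_F_shelling by auto
    show ?thesis
    proof (cases "v \<in> W'")
      case True
      with W' walls_v obtain Y' where Y': "Y' \<in> set Ys" "U - F \<subseteq> Y'" "W' = cone Y'"
        unfolding set_Delta_F_shelling by auto
      then have "F - {x} \<subseteq> insert v (Y' \<inter> F)"
        using x(2) \<open>W \<subseteq> W'\<close> unfolding cone_def by simp
      then have "U - {x} \<subseteq> Y'"
        using Y'(2) v_notin_F by blast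
      then show ?thesis
        using coatom_not_in_facet Y'(1) by simp
    next
      case False
      with W' cone_v obtain y where "y \<in> restriction" "W' = F - {y}"
        unfolding set_Delta_F_shelling by auto
      then show ?thesis
        using antichain_walls x \<open>W \<subseteq> W'\<close> unfolding antichain_def by blast
    qed
  qed
qed

lemma distinct_Delta_F_shelling: "distinct Delta_F_shelling"
proof -
  have "inj_on (\<lambda>x. F - {x}) (set walls_list)"
    using walls_list restriction_subset by (auto intro!: inj_onI)
  moreover have "inj_on cone (set (filter (\<lambda>Y. U - F \<subseteq> Y) Ys))"
  proof (rule inj_onI)
    fix Y Y' assume "Y \<in> set (filter (\<lambda>Y. U - F \<subseteq> Y) Ys)" "Y' \<in> set (filter (\<lambda>Y. U - F \<subseteq> Y) Ys)"
      "cone Y = cone Y'"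
    then show "Y = Y'"
      using cone_subset_cone_iff[of Y Y'] cone_subset_cone_iff[of Y' Y] facet_subset by auto
  qed
  moreover have "v \<in> cone Y" "v \<notin> F - {x}" for Y x
    unfolding cone_def using v_notin_F by auto
  ultimately show ?thesis
    unfolding Delta_F_shelling_def using walls_list distinct by (auto simp: distinct_map)
qed

lemma shelling_order_Delta_F_shelling: "shelling_order Delta_F_shelling"
  unfolding Delta_F_shelling_def
proof (rule shelling_order_append)
  show "shelling_order (map (\<lambda>x. F - {x}) walls_list)"
    using walls_list restriction_subset by (intro shelling_order_walls) auto
  have "shelling_order Ys"
    using shelling by simp
  moreover have "\<forall>X\<in>set (filter (\<lambda>Y. U - F \<subseteq> Y) Ys). U - F \<subseteq> X \<and> X \<subseteq> (U - F) \<union> F \<and> v \<notin> X"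
    using facet_subset v_notin by auto
  ultimately show "shelling_order (map cone (filter (\<lambda>Y. U - F \<subseteq> Y) Ys))"
    unfolding cone_def[abs_def] by (intro shelling_order_map_cone shelling_order_filter_superset)
  show "\<forall>X\<in>set (map cone (filter (\<lambda>Y. U - F \<subseteq> Y) Ys)). shelling_step (map (\<lambda>x. F - {x}) walls_list) X"
  proof
    fix X assume "X \<in> set (map cone (filter (\<lambda>Y. U - F \<subseteq> Y) Ys))"
    then obtain Y where "Y \<in> set Ys" "X = cone Y"
      by auto
    moreover obtain x where "x \<in> restriction" "x \<notin> Y"
      using last_facet_wall \<open>Y \<in> set Ys\<close> by blast
    ultimately have "v \<in> X - W" "X - {v} \<subseteq> F - {x}" if "W \<in> set (map (\<lambda>x. F - {x}) walls_list)" for W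
      using that v_notin_F restriction_subset unfolding cone_def by auto
    moreover have "F - {x} \<in> set (map (\<lambda>x. F - {x}) walls_list)"
      using \<open>x \<in> restriction\<close> walls_list by simp
    ultimately show "shelling_step (map (\<lambda>x. F - {x}) walls_list) X"
      unfolding shelling_step_def by blast
  qed
qed

lemma is_shelling_Delta_F_shelling: "is_shelling (gen_complex (set Delta_F_shelling)) Delta_F_shelling"
proof -
  have "\<forall>X\<in>set Delta_F_shelling. finite X"
    using Delta_F_shelling_subset finite_F finite_subset by blast
  then show ?thesis
    using is_shelling_iff facets_gen_complex antichain_Delta_F_shelling distinct_Delta_F_shelling
      shelling_order_Delta_F_shelling by blast
qed

lemma simplicial_complex_Delta_F_shelling:
  "simplicial_complex (insert v F) (gen_complex (set Delta_F_shelling))"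
  using finite_F Delta_F_shelling_subset by (intro simplicial_complex_gen_complex) auto

lemma shell_G_Delta_F_shelling:
  assumes Ys: "Ys = Ps @ X # Qs" and X: "U - F \<subseteq> X"
  shows "\<exists>j<length Delta_F_shelling. Delta_F_shelling ! j = cone X
           \<and> shell_G Delta_F_shelling j = shell_G (Ys @ [F]) (length Ps) \<inter> F"
proof -
  let ?walls = "map (\<lambda>x. F - {x}) walls_list"
  let ?Ls = "?walls @ map cone (filter (\<lambda>Y. U - F \<subseteq> Y) Ps)"
  have "filter (\<lambda>Y. U - F \<subseteq> Y) Ys
      = filter (\<lambda>Y. U - F \<subseteq> Y) Ps @ X # filter (\<lambda>Y. U - F \<subseteq> Y) Qs"
    using Ys X by simp
  then have L: "Delta_F_shelling = ?Ls @ cone X # map cone (filter (\<lambda>Y. U - F \<subseteq> Y) Qs)"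
    unfolding Delta_F_shelling_def by simp
  have "X \<subseteq> U"
    using facet_subset Ys by simp
  then have "finite X"
    using finite_U finite_subset by blast
  then have "finite (cone X)"
    unfolding cone_def by simp
  then have "shell_G Delta_F_shelling (length ?Ls) = {z \<in> cone X. \<forall>Y\<in>set ?Ls. \<not> cone X - {z} \<subseteq> Y}"
    unfolding L by (rule shell_G_append_Cons)
  also have "\<dots> = {z \<in> X. \<forall>Y\<in>set Ps. \<not> X - {z} \<subseteq> Y} \<inter> F"
  proof -
    have "\<exists>Y\<in>set ?walls. X \<inter> F \<subseteq> Y"
      using last_facet_wall[of X] Ys walls_list by auto
    moreover have "\<forall>Y\<in>set ?walls. v \<notin> Y"
      using v_notin_F by auto
    ultimately show ?thesis
      using cone_shell_G_set_eq[of "U - F" F X v ?walls Ps] X \<open>X \<subseteq> U\<close> v_notin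
      unfolding cone_def[abs_def] by blast
  qed
  also have "\<dots> = shell_G (Ys @ [F]) (length Ps) \<inter> F"
    using shell_G_append_Cons[OF \<open>finite X\<close>, of Ps "Qs @ [F]"] Ys by simp
  finally show ?thesis
    unfolding L by (intro exI[of _ "length ?Ls"]) (simp add: nth_append)
qed

lemma shell_G_Delta_F_shelling_nth:
  assumes "i < length (Ys @ [F])" "(Ys @ [F]) ! i \<union> F = U"
  shows "\<exists>j<length Delta_F_shelling. Delta_F_shelling ! j = (Ys @ [F]) ! i \<inter> F \<union> {v}
           \<and> shell_G Delta_F_shelling j = shell_G (Ys @ [F]) i \<inter> F"
proof -
  have "(Ys @ [F]) ! i \<noteq> F"
    using assms(2) not_complement_subset_F by auto
  then have i: "i < length Ys"
    using assms(1) by (metis less_antisym length_append_singleton nth_append_length)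
  then have "(Ys @ [F]) ! i = Ys ! i"
    by (simp add: nth_append)
  moreover have "Ys ! i \<subseteq> U"
    using facet_subset i by simp
  ultimately have "U - F \<subseteq> Ys ! i"
    using assms(2) union_F_eq_U_iff by simp
  with \<open>(Ys @ [F]) ! i = Ys ! i\<close> show ?thesis
    using shell_G_Delta_F_shelling[OF id_take_nth_drop[OF i]] i unfolding cone_def by simp
qed

end

lemma shelling_last_facetI:
  assumes "simplicial_complex U K" "finite U" "\<forall>X\<in>K. card X + 2 \<le> card U"
    and "is_shelling K (Ys @ [F])" "v \<notin> U"
  shows "shelling_last_facet U Ys F v"
proof -
  have facets: "set (Ys @ [F]) = facets K" "distinct (Ys @ [F])"
    using assms(4) unfolding is_shelling_def by auto
  then have "set (Ys @ [F]) \<subseteq> K"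
    unfolding facets_def maximal_sets_def by auto
  moreover have "finite X \<and> X \<subseteq> U" if "X \<in> K" for X
    using assms(1) that unfolding simplicial_complex_def by simp
  ultimately have "\<forall>X\<in>set (Ys @ [F]). finite X \<and> X \<subseteq> U \<and> card X + 2 \<le> card U"
    using assms(3) by blast
  moreover have "shelling_order (Ys @ [F])"
    using assms(4) calculation is_shelling_iff by blast
  moreover have "antichain (set (Ys @ [F]))"
    using antichain_facets facets(1) by metis
  ultimately show ?thesis
    using facets(2) assms(2,5) by unfold_locales auto
qed

theorem lemma4p8:
  fixes K :: "nat set set" and n v :: nat and Fs :: "nat set list"
    and F :: "nat set" and q :: nat and A B KF :: "nat set set"
  assumes cplx: "simplicial_complex {1..n} K"
    and dim: "\<forall>X\<in>K. int (card X) - 1 \<le> int n - 3"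
    and shell: "is_shelling K Fs"
    and v: "v \<notin> {1..n}"
  defines "q \<equiv> length Fs"
    and "F \<equiv> last Fs"
    and "A \<equiv> maximal_sets {Fs ! i \<inter> F | i. i < q \<and> \<not> F \<subseteq> Fs ! i \<and> Fs ! i \<union> F \<noteq> {1..n}}"
    and "B \<equiv> {(Fs ! i \<inter> F) \<union> {v} | i. i < q \<and> Fs ! i \<union> F = {1..n}}"
    and "KF \<equiv> gen_complex (A \<union> B)"
  shows "simplicial_complex (F \<union> {v}) KF \<and> shellable KF \<and>
    (\<exists>L. is_shelling KF L \<and>
       (\<forall>i<q. Fs ! i \<union> F = {1..n} \<longrightarrow>
          (\<exists>j<length L. L ! j = (Fs ! i \<inter> F) \<union> {v} \<and>
                        shell_G L j = shell_G Fs i \<inter> F)))"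
proof (cases "Fs = []")
  case True
  then have "KF = {}"
    unfolding KF_def A_def B_def q_def gen_complex_def maximal_sets_def by auto
  moreover have "is_shelling {} []"
    unfolding is_shelling_def facets_def maximal_sets_def by simp
  ultimately show ?thesis
    using True unfolding q_def simplicial_complex_def shellable_def by auto
next
  case False
  then have Fs: "butlast Fs @ [F] = Fs"
    unfolding F_def by simp
  have "\<forall>X\<in>K. card X + 2 \<le> card {1..n}"
    using dim by fastforce
  then interpret shelling_last_facet "{1..n}" "butlast Fs" F v
    using cplx shell v Fs by (intro shelling_last_facetI) auto
  have "A = (\<lambda>x. F - {x}) ` restriction"
    using type_A_facets setcompr_nth_eq[of "\<lambda>Y. Y \<inter> F" Fs "\<lambda>Y. \<not> F \<subseteq> Y \<and> Y \<union> F \<noteq> {1..n}"]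
    unfolding A_def q_def Fs by simp
  moreover have "B = cone ` set (filter (\<lambda>Y. {1..n} - F \<subseteq> Y) (butlast Fs))"
    using type_B_facets setcompr_nth_eq[of "\<lambda>Y. Y \<inter> F \<union> {v}" Fs "\<lambda>Y. Y \<union> F = {1..n}"]
    unfolding B_def q_def Fs by simp
  ultimately have "KF = gen_complex (set Delta_F_shelling)"
    unfolding KF_def set_Delta_F_shelling by simp
  then show ?thesis
    using simplicial_complex_Delta_F_shelling is_shelling_Delta_F_shelling shell_G_Delta_F_shelling_nth
    unfolding shellable_def q_def Fs by auto
qed

end
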